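(* Let $\lambda$ be a partition and let $T\xrightarrow{I}T'$ be an edge of the crystal skeleton $\mathsf{CS}(\lambda)$ with label the Dyck pattern interval $I$. Then there is an edge between $T$ and $T'$ in the dual equivalence graph $\mathsf{DE}(\lambda)$ if and only if $|I|=3$.
   Context: French notation; $|\lambda|=N$; $\mathsf{SYT}(\lambda)$ standard tableaux; reading word $\mathsf{row}(T)$ reads rows left to right from top row to bottom row. Standardization $\mathsf{std}$ of a semistandard tableau replaces the $a_j$ entries $j$, in reading order, by $a_1+\dots+a_{j-1}+1,\dots,a_1+\dots+a_j$. Crystal operator $f_i$ on semistandard tableaux: in the subword of $\mathsf{row}(b)$ of letters $i,i+1$, bracket each $i+1$ with an unbracketed $i$ to its right (parenthesis matching); $f_i$ changes the rightmost unbracketed $i$ to $i+1$. For a permutation $\pi$ of $[N]$ and $I=[i,i+2m]\subseteq[N]$, $m\ge1$, $I$ is a Dyck pattern interval of $\pi$ if the RSK insertion tableau of the subword $\pi|_I$ of letters in $I$ has bottom row $i,\dots,i+m$ and top row $i+m+1,\dots,i+2m$; a Dyck pattern interval of $T$ is one of $\mathsf{row}(T)$. The (labeled) crystal skeleton $\mathsf{CS}(\lambda)$ is the directed graph on $\mathsf{SYT}(\lambda)$ with, for each $T$ and each Dyck pattern interval $I=[i,i+2m]$ of $T$, an edge $T\xrightarrow{I}T'$ where $T'=\mathsf{std}(f_i(b))$ and $b$ is obtained from $T$ by replacing entries $i,\dots,i+m$ by $i$ and $i+m+1,\dots,i+2m$ by $i+1$. (Equivalently it is obtained from the crystal $B(\lambda)_n$,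 $n\ge N$, by contracting each quasi-crystal $\{b:\mathsf{std}(b)=T\}$ to a vertex.) The dual equivalence graph $\mathsf{DE}(\lambda)$ has vertex set $\mathsf{SYT}(\lambda)$ and an edge $T$—$D_i(T)$ for $1<i<N$, where on reading words $D_i$ acts by $\ldots i\ldots i{+}1\ldots i{-}1\ldots \leftrightarrow \ldots i{-}1\ldots i{+}1\ldots i\ldots$ and $\ldots i\ldots i{-}1\ldots i{+}1\ldots\leftrightarrow\ldots i{+}1\ldots i{-}1\ldots i\ldots$ (only the letters $i-1,i,i+1$ change), and is undefined otherwise. *)

theory Defs
  imports Main
begin

text \<open>A tableau is a list of rows, the first row being the bottom (longest) row
(French notation). Entries are natural numbers.\<close>

type_synonym tableau = "nat list list"

definition is_partition :: "nat list \<Rightarrow> bool" where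
  "is_partition lam \<longleftrightarrow> sorted (rev lam) \<and> (\<forall>x\<in>set lam. 0 < x)"

definition shape :: "tableau \<Rightarrow> nat list" where
  "shape T = map length T"

definition row_word :: "tableau \<Rightarrow> nat list" where
  "row_word T = concat (rev T)"

definition SYT :: "nat list \<Rightarrow> tableau set" where
  "SYT lam = {T. shape T = lam \<and> distinct (concat T) \<and> set (concat T) = {1..sum_list lam}
     \<and> (\<forall>r\<in>set T. sorted_wrt (<) r)
     \<and> (\<forall>j k. Suc j < length T \<and> k < length (T ! Suc j) \<longrightarrow>
            k < length (T ! j) \<and> T ! j ! k < T ! Suc j ! k)}"

fun chunks :: "nat list \<Rightarrow> 'a list \<Rightarrow> 'a list list" where
  "chunks [] w = []"
| "chunks (l # ls) w = take l w # chunks ls (drop l w)"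

definition tab_of_word :: "nat list \<Rightarrow> nat list \<Rightarrow> tableau" where
  "tab_of_word sh w = rev (chunks (rev sh) w)"

definition std_word :: "nat list \<Rightarrow> nat list" where
  "std_word w = map (\<lambda>p. length (filter (\<lambda>y. y < w ! p) w)
                        + length (filter (\<lambda>y. y = w ! p) (take p w)) + 1) [0..<length w]"

definition std_tab :: "tableau \<Rightarrow> tableau" where
  "std_tab b = tab_of_word (shape b) (std_word (row_word b))"

text \<open>Positions (in the word) of the unbracketed letters i: scanning left to right,
each i+1 opens a bracket which is closed by the next unbracketed i to its right.
Arguments: i, number of currently open i+1's, current position, remaining word.\<close>
fun unbr :: "nat \<Rightarrow> nat \<Rightarrow> nat \<Rightarrow> nat list \<Rightarrow> nat list" where
  "unbr i c p [] = []"
| "unbr i c p (x # xs) =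
     (if x = Suc i then unbr i (Suc c) (Suc p) xs
      else if x = i then (if 0 < c then unbr i (c - 1) (Suc p) xs else p # unbr i c (Suc p) xs)
      else unbr i c (Suc p) xs)"

definition f_word :: "nat \<Rightarrow> nat list \<Rightarrow> nat list option" where
  "f_word i w = (let ps = unbr i 0 0 w in
      if ps = [] then None else Some (w[last ps := Suc i]))"

definition f_tab :: "nat \<Rightarrow> tableau \<Rightarrow> tableau option" where
  "f_tab i b = map_option (tab_of_word (shape b)) (f_word i (row_word b))"

definition row_ins :: "nat \<Rightarrow> nat list \<Rightarrow> nat list \<times> nat option" where
  "row_ins x r = (let a = takeWhile (\<lambda>y. y \<le> x) r; b = dropWhile (\<lambda>y. y \<le> x) r in
      if b = [] then (r @ [x], None) else (a @ x # tl b, Some (hd b)))"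

fun tab_ins :: "nat \<Rightarrow> tableau \<Rightarrow> tableau" where
  "tab_ins x [] = [[x]]"
| "tab_ins x (r # rs) = (case row_ins x r of
       (r', None) \<Rightarrow> r' # rs
     | (r', Some y) \<Rightarrow> r' # tab_ins y rs)"

definition rsk_P :: "nat list \<Rightarrow> tableau" where
  "rsk_P w = foldl (\<lambda>T x. tab_ins x T) [] w"

definition dyck_interval :: "nat list \<Rightarrow> nat \<Rightarrow> nat \<Rightarrow> bool" where
  "dyck_interval pi i m \<longleftrightarrow> 1 \<le> m \<and> 1 \<le> i \<and> i + 2 * m \<le> length pi \<and>
     rsk_P (filter (\<lambda>x. i \<le> x \<and> x \<le> i + 2 * m) pi)
       = [[i..<i + m + 1], [i + m + 1..<i + 2 * m + 1]]"

definition collapse :: "nat \<Rightarrow> nat \<Rightarrow> tableau \<Rightarrow> tableau" where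
  "collapse i m T = map (map (\<lambda>x. if i \<le> x \<and> x \<le> i + m then i
                                  else if i + m < x \<and> x \<le> i + 2 * m then Suc i else x)) T"

definition cs_edge :: "nat list \<Rightarrow> tableau \<Rightarrow> nat set \<Rightarrow> tableau \<Rightarrow> bool" where
  "cs_edge lam T I T' \<longleftrightarrow> T \<in> SYT lam \<and>
     (\<exists>i m. I = {i..i + 2 * m} \<and> dyck_interval (row_word T) i m \<and>
        (\<exists>b'. f_tab i (collapse i m T) = Some b' \<and> T' = std_tab b'))"

definition swap_vals :: "nat \<Rightarrow> nat \<Rightarrow> nat \<Rightarrow> nat" where
  "swap_vals a b x = (if x = a then b else if x = b then a else x)"

definition D_op :: "nat \<Rightarrow> tableau \<Rightarrow> tableau option" where
  "D_op i T = (let w = row_word T;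
                   a = the (List.find (\<lambda>k. w ! k = i - 1) [0..<length w]);
                   b = the (List.find (\<lambda>k. w ! k = i) [0..<length w]);
                   c = the (List.find (\<lambda>k. w ! k = i + 1) [0..<length w]) in
     if (b < c \<and> c < a) \<or> (a < c \<and> c < b) then Some (map (map (swap_vals (i - 1) i)) T)
     else if (b < a \<and> a < c) \<or> (c < a \<and> a < b) then Some (map (map (swap_vals i (i + 1))) T)
     else None)"

definition de_adj :: "nat list \<Rightarrow> tableau \<Rightarrow> tableau \<Rightarrow> bool" where
  "de_adj lam T T' \<longleftrightarrow> T \<in> SYT lam \<and> T' \<in> SYT lam \<and>
     (\<exists>i. 1 < i \<and> i < sum_list lam \<and> (D_op i T = Some T' \<or> D_op i T' = Some T))"

end

theory Submission
  imports Defs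
begin

text \<open>
  Let \<open>w\<close> be the reading word of \<open>T\<close> and \<open>I = [i, i + 2m]\<close>. The Dyck condition on \<open>I\<close>
  says that in \<open>w\<close> the small letters \<open>i, \<dots>, i + m\<close> and the big letters
  \<open>i + m + 1, \<dots>, i + 2m\<close> each occur in increasing order and that every big letter is
  bracketed with a later small one; this is read off from an invariant of row insertion.
  After collapsing, exactly one letter \<open>i\<close> is unbracketed, coming from the small letter
  \<open>x\<close> at position \<open>fpos\<close>; \<open>f\<^sub>i\<close> turns it into \<open>i + 1\<close>, and standardizing shows that
  the reading word of \<open>T'\<close> arises from \<open>w\<close> by raising \<open>x\<close> to \<open>x + m\<close> and lowering each
  small letter after \<open>fpos\<close> and each big letter before \<open>fpos\<close> by one. A dual equivalence
  move interchanges two consecutive values, so it changes every entry by at most one, which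
  forces \<open>m = 1\<close>. Conversely, for \<open>m = 1\<close> the letters \<open>i, i + 1, i + 2\<close> occur in \<open>w\<close> in the
  order \<open>i, i + 2, i + 1\<close> or \<open>i + 2, i, i + 1\<close>, and \<open>T'\<close> is \<open>T\<close> with \<open>i, i + 1\<close>
  (respectively \<open>i + 1, i + 2\<close>) interchanged, which is the dual equivalence \<open>D\<^sub>i\<^sub>+\<^sub>1\<close>.
\<close>

section \<open>Insertion tableaux with two rows\<close>

fun open_brackets :: "nat \<Rightarrow> nat \<Rightarrow> nat list \<Rightarrow> nat" where
  "open_brackets M c [] = c"
| "open_brackets M c (x # xs) = open_brackets M (if M < x then Suc c else c - 1) xs"

lemma open_brackets_append:
  "open_brackets M c (xs @ ys) = open_brackets M (open_brackets M c xs) ys"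
  by (induction xs arbitrary: c) auto

lemma open_brackets_le: "open_brackets M c xs \<le> c + length (filter (\<lambda>x. M < x) xs)"
proof (induction xs arbitrary: c)
  case (Cons x xs)
  show ?case using Cons[of "if M < x then Suc c else c - 1"] by auto
qed simp

(* The insertion tableau of a word whose letters \<le> M, and whose letters > M, occur in increasing
   order: the k big letters that get matched are bumped into the second row. *)
definition two_row_tableau :: "nat \<Rightarrow> nat list \<Rightarrow> tableau" where
  "two_row_tableau M p = (let S = filter (\<lambda>x. x \<le> M) p; B = filter (\<lambda>x. M < x) p;
      k = length B - open_brackets M 0 p in (S @ drop k B) # (if k = 0 then [] else [take k B]))"

(* Preserved by row insertion and excluding every tableau [small letters, big letters]. *)
definition two_row_obstructed :: "nat \<Rightarrow> tableau \<Rightarrow> bool" where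
  "two_row_obstructed M P \<longleftrightarrow> 3 \<le> length P \<or> (2 \<le> length P \<and> ((\<exists>y\<in>set (P ! 1). y \<le> M)
      \<or> (\<exists>y\<in>set (P ! 0). \<exists>z\<in>set (P ! 1). M < y \<and> y < z)))"

lemma row_ins_None: "row_ins x r = (r', None) \<Longrightarrow> r' = r @ [x] \<and> (\<forall>y\<in>set r. y \<le> x)"
  unfolding row_ins_def Let_def by (auto split: if_splits simp: dropWhile_eq_Nil_conv)

lemma row_ins_Some:
  assumes "row_ins x r = (r', Some b)"
  shows "x \<in> set r' \<and> x < b \<and> set r \<subseteq> insert b (set r') \<and> b = hd (dropWhile (\<lambda>y. y \<le> x) r)"
proof -
  let ?a = "takeWhile (\<lambda>y. y \<le> x) r" and ?d = "dropWhile (\<lambda>y. y \<le> x) r"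
  from assms have ne: "?d \<noteq> []" and r': "r' = ?a @ x # tl ?d" and b: "b = hd ?d"
    unfolding row_ins_def Let_def by (auto split: if_splits)
  have "r = ?a @ hd ?d # tl ?d" using ne by simp
  then have "set r \<subseteq> insert b (set r')" using r' b
    by (metis Un_iff insert_iff list.set(2) set_append subsetI)
  moreover have "\<not> hd ?d \<le> x" using ne hd_dropWhile by blast
  ultimately show ?thesis using r' b by auto
qed

lemma row_ins_cases:
  obtains r' where "row_ins x r = (r', None)" | r' b where "row_ins x r = (r', Some b)"
  by (cases "row_ins x r") (metis option.exhaust)

lemma row_ins_all_le: "\<forall>y\<in>set r. y \<le> x \<Longrightarrow> row_ins x r = (r @ [x], None)"
  unfolding row_ins_def Let_def by (simp add: dropWhile_eq_Nil_conv)

lemma row_ins_append_bump: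
  "\<forall>y\<in>set S. y \<le> x \<Longrightarrow> Q \<noteq> [] \<Longrightarrow> x < hd Q \<Longrightarrow>
   row_ins x (S @ Q) = (S @ x # tl Q, Some (hd Q))"
  unfolding row_ins_def Let_def by (cases Q) (auto simp: takeWhile_append2 dropWhile_append2)

lemma tab_ins_Cons_row: "\<exists>r rs. tab_ins x P = r # rs \<and> x \<in> set r"
proof (cases P)
  case (Cons r0 rest)
  then show ?thesis
    by (cases x r0 rule: row_ins_cases) (auto dest: row_ins_None row_ins_Some)
qed simp

lemma length_tab_ins: "length P \<le> length (tab_ins x P)"
proof (induction P arbitrary: x)
  case (Cons r0 rest)
  then show ?case by (cases x r0 rule: row_ins_cases) auto
qed simp

lemma tab_ins_bump:
  assumes "row_ins x r0 = (r', Some b)"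
  obtains r1 rs where "tab_ins x (r0 # rest) = r' # r1 # rs" and "b \<in> set r1"
  using assms tab_ins_Cons_row[of b rest] that by auto

lemma two_row_obstructed_tab_ins:
  assumes "two_row_obstructed M P"
  shows "two_row_obstructed M (tab_ins x P)"
proof (cases "3 \<le> length P")
  case True
  then show ?thesis using length_tab_ins[of P x] unfolding two_row_obstructed_def by auto
next
  case False
  with assms have "length P = 2" unfolding two_row_obstructed_def by auto
  then obtain r0 r1 where P: "P = [r0, r1]"
    by (metis length_0_conv length_Suc_conv numeral_2_eq_2)
  with assms False have obs: "(\<exists>y\<in>set r1. y \<le> M) \<or> (\<exists>y\<in>set r0. \<exists>z\<in>set r1. M < y \<and> y < z)"
    unfolding two_row_obstructed_def by simp
  show ?thesis
  proof (cases x r0 rule: row_ins_cases)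
    case (1 r')
    then show ?thesis using P obs row_ins_None[OF 1] unfolding two_row_obstructed_def by auto
  next
    case (2 r' b)
    note bump = row_ins_Some[OF 2]
    show ?thesis
    proof (cases b r1 rule: row_ins_cases)
      case (1 r1')
      then have t: "tab_ins x P = [r', r1 @ [b]]" using P 2 row_ins_None by simp
      have "\<exists>y\<in>set r'. \<exists>z\<in>set (r1 @ [b]). M < y \<and> y < z"
        if "y \<in> set r0" "z \<in> set r1" "M < y" "y < z" for y z
        using that bump row_ins_None[OF 1] by (cases "y = b") force+
      then show ?thesis using obs unfolding t two_row_obstructed_def by auto
    next
      case (2 r1' b2)
      then have "tab_ins x P = r' # r1' # tab_ins b2 []" using P \<open>row_ins x r0 = (r', Some b)\<close> by simp
      then show ?thesis unfolding two_row_obstructed_def by simp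
    qed
  qed
qed

lemma two_row_tableau_first_row:
  obtains Q rest where "two_row_tableau M p = (filter (\<lambda>y. y \<le> M) p @ Q) # rest"
    and "filter (\<lambda>y. M < y) p = (if rest = [] then [] else hd rest) @ Q" and "length rest \<le> 1"
proof -
  define B where "B = filter (\<lambda>y. M < y) p"
  define k where "k = length B - open_brackets M 0 p"
  show ?thesis
    by (rule that[of "drop k B" "if k = 0 then [] else [take k B]"])
      (simp_all add: two_row_tableau_def Let_def B_def k_def)
qed

lemma two_row_tableau_snoc_small:
  assumes "x \<le> M"
  shows "two_row_tableau M (p @ [x]) =
    (let S = filter (\<lambda>y. y \<le> M) p; B = filter (\<lambda>y. M < y) p;
         k = length B - (open_brackets M 0 p - 1)
     in (S @ x # drop k B) # (if k = 0 then [] else [take k B]))"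
  using assms unfolding two_row_tableau_def Let_def by (simp add: open_brackets_append)

lemma tab_ins_two_row_small_max:
  assumes x: "x \<le> M" and above: "\<forall>y\<in>set (filter (\<lambda>y. y \<le> M) p). y < x"
    and sorted_big: "sorted_wrt (<) (filter (\<lambda>y. M < y) p)"
  shows "tab_ins x (two_row_tableau M p) = two_row_tableau M (p @ [x])"
proof -
  define S where "S = filter (\<lambda>y. y \<le> M) p"
  define B where "B = filter (\<lambda>y. M < y) p"
  define c where "c = open_brackets M 0 p"
  define k where "k = length B - c"
  have c_le: "c \<le> length B" using open_brackets_le[of M 0 p] unfolding c_def B_def by simp
  have old: "two_row_tableau M p = (S @ drop k B) # (if k = 0 then [] else [take k B])"
    unfolding two_row_tableau_def Let_def S_def B_def c_def k_def ..
  have new: "two_row_tableau M (p @ [x]) =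
      (S @ x # drop (length B - (c - 1)) B) # (if length B - (c - 1) = 0 then [] else [take (length B - (c - 1)) B])"
    unfolding two_row_tableau_snoc_small[OF x] Let_def S_def B_def c_def ..
  have S_le: "\<forall>y\<in>set S. y \<le> x" using above unfolding S_def by auto
  show ?thesis
  proof (cases "c = 0")
    case True
    then have "drop k B = []" unfolding k_def by simp
    then show ?thesis using old new True row_ins_all_le[OF S_le] by (simp add: k_def)
  next
    case False
    then have k: "k < length B" "length B - (c - 1) = Suc k" using c_le unfolding k_def by auto
    have hd_big: "hd (drop k B) = B ! k" using k by (simp add: hd_drop_conv_nth)
    have "x < B ! k" using x k(1) nth_mem[OF k(1)] unfolding B_def by fastforce
    then have "row_ins x (S @ drop k B) = (S @ x # drop (Suc k) B, Some (B ! k))"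
      using row_ins_append_bump[OF S_le, of "drop k B"] k hd_big by (simp add: drop_Suc tl_drop)
    moreover have "\<forall>y\<in>set (take k B). y \<le> B ! k"
      using sorted_big k(1) unfolding B_def[symmetric]
      by (auto simp: in_set_conv_nth sorted_wrt_iff_nth_less less_imp_le)
    ultimately show ?thesis using old new k row_ins_all_le
      by (cases "k = 0") (auto simp: take_Suc_conv_app_nth hd_conv_nth)
  qed
qed

lemma tab_ins_two_row_big_max:
  assumes x: "M < x" and above: "\<forall>y\<in>set (filter (\<lambda>y. M < y) p). y < x"
  shows "tab_ins x (two_row_tableau M p) = two_row_tableau M (p @ [x])"
proof -
  define B where "B = filter (\<lambda>y. M < y) p"
  define k where "k = length B - open_brackets M 0 p"
  have "\<forall>y\<in>set (filter (\<lambda>y. y \<le> M) p @ drop k B). y \<le> x"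
    using above x set_drop_subset[of k B] unfolding B_def by fastforce
  from row_ins_all_le[OF this] show ?thesis
    using x open_brackets_le[of M 0 p]
    unfolding two_row_tableau_def Let_def B_def[symmetric] k_def[symmetric]
    by (simp add: open_brackets_append B_def k_def)
qed

lemma tab_ins_two_row_small_inversion:
  assumes "x \<le> M" "y \<in> set p" "y \<le> M" "x < y"
  shows "two_row_obstructed M (tab_ins x (two_row_tableau M p))"
proof -
  obtain Q rest where P: "two_row_tableau M p = (filter (\<lambda>y. y \<le> M) p @ Q) # rest"
    using two_row_tableau_first_row by blast
  let ?S = "filter (\<lambda>y. y \<le> M) p"
  have y: "y \<in> set ?S" using assms by simp
  show ?thesis
  proof (cases x "?S @ Q" rule: row_ins_cases)
    case (1 r')
    have "y \<le> x" using row_ins_None[OF 1] y by simp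
    with assms(4) show ?thesis by simp
  next
    case (2 r' b)
    have "dropWhile (\<lambda>z. z \<le> x) (?S @ Q) = dropWhile (\<lambda>z. z \<le> x) ?S @ Q"
      using y assms(4) by (intro dropWhile_append1) auto
    moreover have "dropWhile (\<lambda>z. z \<le> x) ?S \<noteq> []"
      using y assms(4) by (auto simp: dropWhile_eq_Nil_conv)
    ultimately have "b \<in> set ?S" using row_ins_Some[OF 2]
      by (metis hd_append2 hd_in_set set_dropWhileD)
    then have "b \<le> M" by simp
    obtain r1 rs where "tab_ins x (two_row_tableau M p) = r' # r1 # rs" "b \<in> set r1"
      using tab_ins_bump[OF 2] P by metis
    with \<open>b \<le> M\<close> show ?thesis unfolding two_row_obstructed_def by auto
  qed
qed

lemma tab_ins_two_row_big_inversion: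
  assumes "M < x" "y \<in> set p" "M < y" "x < y"
  shows "two_row_obstructed M (tab_ins x (two_row_tableau M p))"
proof -
  obtain Q rest where P: "two_row_tableau M p = (filter (\<lambda>y. y \<le> M) p @ Q) # rest"
    and B: "filter (\<lambda>y. M < y) p = (if rest = [] then [] else hd rest) @ Q" and "length rest \<le> 1"
    using two_row_tableau_first_row by blast
  show ?thesis
  proof (cases x "filter (\<lambda>y. y \<le> M) p @ Q" rule: row_ins_cases)
    case (1 r')
    note none = row_ins_None[OF 1]
    have "y \<notin> set Q"
    proof
      assume "y \<in> set Q"
      then have "y \<le> x" using none by simp
      with assms(4) show False by simp
    qed
    moreover have "y \<in> set (filter (\<lambda>y. M < y) p)" using assms by simp
    ultimately have "rest \<noteq> []" and y: "y \<in> set (hd rest)" using B by (auto split: if_splits)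
    then obtain R where rest: "rest = [R]" and "y \<in> set R"
      using \<open>length rest \<le> 1\<close> by (cases rest) auto
    moreover have "tab_ins x (two_row_tableau M p) = [r', R]"
      using P 1 rest by simp
    ultimately show ?thesis using none assms unfolding two_row_obstructed_def by auto
  next
    case (2 r' b)
    obtain r1 rs where "tab_ins x (two_row_tableau M p) = r' # r1 # rs" "b \<in> set r1"
      using tab_ins_bump[OF 2] P by metis
    with row_ins_Some[OF 2] assms(1) show ?thesis unfolding two_row_obstructed_def by auto
  qed
qed

lemma tab_ins_two_row_tableau:
  assumes x: "x \<notin> set p"
    and sorted: "sorted_wrt (<) (filter (\<lambda>y. y \<le> M) p)" "sorted_wrt (<) (filter (\<lambda>y. M < y) p)"
  shows "two_row_obstructed M (tab_ins x (two_row_tableau M p)) \<or>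
    (sorted_wrt (<) (filter (\<lambda>y. y \<le> M) (p @ [x])) \<and> sorted_wrt (<) (filter (\<lambda>y. M < y) (p @ [x]))
     \<and> tab_ins x (two_row_tableau M p) = two_row_tableau M (p @ [x]))"
proof -
  consider (small_max) "x \<le> M" "\<forall>y\<in>set (filter (\<lambda>y. y \<le> M) p). y < x"
    | (big_max) "M < x" "\<forall>y\<in>set (filter (\<lambda>y. M < y) p). y < x"
    | (small_inversion) y where "x \<le> M" "y \<in> set p" "y \<le> M" "x < y"
    | (big_inversion) y where "M < x" "y \<in> set p" "M < y" "x < y"
  proof -
    have "(\<forall>y\<in>set (filter P p). y < x) \<or> (\<exists>y\<in>set (filter P p). x < y)" for P
      using x by (metis filter_is_subset linorder_neqE_nat subsetD)
    from this[of "\<lambda>y. y \<le> M"] this[of "\<lambda>y. M < y"] that show ?thesis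
      by (cases "x \<le> M") auto
  qed
  then show ?thesis
  proof cases
    case small_max
    then show ?thesis using sorted tab_ins_two_row_small_max[OF small_max sorted(2)]
      by (simp add: sorted_wrt_append)
  next
    case big_max
    then show ?thesis using sorted tab_ins_two_row_big_max[OF big_max]
      by (simp add: sorted_wrt_append)
  next
    case small_inversion
    then show ?thesis using tab_ins_two_row_small_inversion by blast
  next
    case big_inversion
    then show ?thesis using tab_ins_two_row_big_inversion by blast
  qed
qed

lemma rsk_P_snoc: "rsk_P (p @ [x]) = tab_ins x (rsk_P p)"
  unfolding rsk_P_def by simp

lemma rsk_P_two_row_or_obstructed:
  assumes "distinct p" "p \<noteq> []"
  shows "two_row_obstructed M (rsk_P p) \<or>
    (sorted_wrt (<) (filter (\<lambda>y. y \<le> M) p) \<and> sorted_wrt (<) (filter (\<lambda>y. M < y) p)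
     \<and> rsk_P p = two_row_tableau M p)"
  using assms
proof (induction p rule: rev_induct)
  case (snoc x p)
  show ?case
  proof (cases "p = []")
    case True
    then show ?thesis by (simp add: rsk_P_def two_row_tableau_def)
  next
    case False
    with snoc have "two_row_obstructed M (rsk_P p) \<or>
      (sorted_wrt (<) (filter (\<lambda>y. y \<le> M) p) \<and> sorted_wrt (<) (filter (\<lambda>y. M < y) p)
       \<and> rsk_P p = two_row_tableau M p)" by simp
    then show ?thesis
      using two_row_obstructed_tab_ins tab_ins_two_row_tableau[of x p M] snoc.prems
      by (auto simp: rsk_P_snoc)
  qed
qed simp

lemma rsk_P_eq_two_rows:
  assumes "distinct u" and P: "rsk_P u = [S, B]" and "B \<noteq> []"
    and S_small: "\<forall>y\<in>set S. y \<le> M" and B_big: "\<forall>y\<in>set B. M < y"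
  shows "filter (\<lambda>y. y \<le> M) u = S" "filter (\<lambda>y. M < y) u = B" "open_brackets M 0 u = 0"
proof -
  have "u \<noteq> []" using P by (auto simp: rsk_P_def)
  moreover have "\<not> two_row_obstructed M [S, B]"
    using S_small B_big unfolding two_row_obstructed_def by (auto simp: not_le)
  ultimately have "two_row_tableau M u = [S, B]"
    using rsk_P_two_row_or_obstructed[OF assms(1)] P by metis
  moreover define B' where "B' = filter (\<lambda>y. M < y) u"
  moreover define k where "k = length B' - open_brackets M 0 u"
  ultimately have "k \<noteq> 0" and S: "filter (\<lambda>y. y \<le> M) u @ drop k B' = S" and B: "take k B' = B"
    unfolding two_row_tableau_def Let_def by (simp_all split: if_splits)
  have "\<forall>y\<in>set (drop k B'). M < y" using set_drop_subset[of k B'] unfolding B'_def by auto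
  then have "drop k B' = []" using S S_small by (cases "drop k B'") auto
  then show "filter (\<lambda>y. y \<le> M) u = S" "filter (\<lambda>y. M < y) u = B" "open_brackets M 0 u = 0"
    using S B \<open>k \<noteq> 0\<close> unfolding B'_def[symmetric] k_def by auto
qed

section \<open>Bracketing the letters \<open>i\<close> and \<open>i + 1\<close>\<close>

(* The counter c of unbr: the number of letters i + 1 not yet matched with a later i. *)
definition open_succs :: "nat \<Rightarrow> nat \<Rightarrow> nat list \<Rightarrow> nat" where
  "open_succs i c xs = open_brackets i c (filter (\<lambda>x. x = i \<or> x = Suc i) xs)"

lemma open_succs_simps [simp]:
  "open_succs i c [] = c"
  "open_succs i c (x # xs) = open_succs i (if x = Suc i then Suc c else if x = i then c - 1 else c) xs"
  unfolding open_succs_def by auto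

lemma open_succs_append: "open_succs i c (xs @ ys) = open_succs i (open_succs i c xs) ys"
  unfolding open_succs_def by (simp add: open_brackets_append)

lemma unbr_append:
  "unbr i c p (xs @ ys) = unbr i c p xs @ unbr i (open_succs i c xs) (p + length xs) ys"
  by (induction xs arbitrary: c p) auto

lemma unbr_nth:
  "q \<in> set (unbr i c p xs) \<Longrightarrow> p \<le> q \<and> q < p + length xs \<and> xs ! (q - p) = i"
proof (induction xs arbitrary: c p)
  case (Cons x xs)
  from Cons.prems obtain c' where "q = p \<and> x = i \<or> q \<in> set (unbr i c' (Suc p) xs)"
    by (auto split: if_splits)
  then show ?case
  proof
    assume "q \<in> set (unbr i c' (Suc p) xs)"
    from Cons.IH[OF this] show ?thesis by (simp add: Suc_diff_Suc)
  qed simp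
qed simp

lemma length_unbr:
  "c + count_list xs (Suc i) + length (unbr i c p xs) = open_succs i c xs + count_list xs i"
proof (induction xs arbitrary: c p)
  case (Cons x xs)
  show ?case
    using Cons[of "Suc c" "Suc p"] Cons[of "c - 1" "Suc p"] Cons[of c "Suc p"] by auto
qed simp

lemma unbr_split_at_i:
  assumes "q < length z" "z ! q = i"
  shows "unbr i c 0 z = unbr i c 0 (take q z)
    @ (if open_succs i c (take q z) = 0 then [q] else [])
    @ unbr i (open_succs i c (take q z) - 1) (Suc q) (drop (Suc q) z)"
proof -
  have "z = take q z @ i # drop (Suc q) z" using assms by (metis id_take_nth_drop)
  then have "unbr i c 0 z = unbr i c 0 (take q z) @ unbr i (open_succs i c (take q z)) q (i # drop (Suc q) z)"
    using assms(1) by (metis add_0 length_take min.absorb4 unbr_append)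
  then show ?thesis by simp
qed

lemma last_unbr:
  assumes "unbr i 0 0 z \<noteq> []" and p: "p = last (unbr i 0 0 z)"
  shows "p < length z" "z ! p = i" "open_succs i 0 (take p z) = 0"
    "unbr i 0 (Suc p) (drop (Suc p) z) = []"
proof -
  have "p \<in> set (unbr i 0 0 z)" using assms by simp
  from unbr_nth[OF this] show p_len: "p < length z" and z_p: "z ! p = i" by auto
  define c where "c = open_succs i 0 (take p z)"
  define U where "U = unbr i (c - 1) (Suc p) (drop (Suc p) z)"
  have split: "unbr i 0 0 z = unbr i 0 0 (take p z) @ (if c = 0 then [p] else []) @ U"
    using unbr_split_at_i[OF p_len z_p] unfolding c_def U_def .
  have before: "q < p" if "q \<in> set (unbr i 0 0 (take p z))" for q
    using unbr_nth[OF that] p_len by simp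
  have after: "p < q" if "q \<in> set U" for q
    using unbr_nth[OF that[unfolded U_def]] by simp
  have "U = []"
  proof (rule ccontr)
    assume "U \<noteq> []"
    then have "p \<in> set U" using p split by simp
    then show False using after by blast
  qed
  then have "c = 0" using split p \<open>p \<in> set (unbr i 0 0 z)\<close> before
    by (cases "c = 0") auto
  then show "open_succs i 0 (take p z) = 0" unfolding c_def .
  from \<open>U = []\<close> \<open>c = 0\<close> show "unbr i 0 (Suc p) (drop (Suc p) z) = []" unfolding U_def by simp
qed

definition collapse_letter :: "nat \<Rightarrow> nat \<Rightarrow> nat \<Rightarrow> nat" where
  "collapse_letter i m x =
    (if i \<le> x \<and> x \<le> i + m then i else if i + m < x \<and> x \<le> i + 2 * m then Suc i else x)"

lemma collapse_eq_map_map: "collapse i m T = map (map (collapse_letter i m)) T"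
  unfolding collapse_def collapse_letter_def ..

lemma collapse_letter_eq_iff:
  "collapse_letter i m y = i \<longleftrightarrow> i \<le> y \<and> y \<le> i + m"
  "1 \<le> m \<Longrightarrow> collapse_letter i m y = Suc i \<longleftrightarrow> i + m < y \<and> y \<le> i + 2 * m"
  by (auto simp: collapse_letter_def)

lemma open_succs_map_collapse_letter:
  "1 \<le> m \<Longrightarrow> open_succs i c (map (collapse_letter i m) u)
     = open_brackets (i + m) c (filter (\<lambda>x. i \<le> x \<and> x \<le> i + 2 * m) u)"
  by (induction u arbitrary: c) (auto simp: collapse_letter_def)

lemma count_list_map: "count_list (map f xs) a = length (filter (\<lambda>x. f x = a) xs)"
  by (induction xs) auto

lemma nth_filter_length_filter_take:
  assumes "q < length xs" "P (xs ! q)"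
  shows "filter P xs ! length (filter P (take q xs)) = xs ! q"
    "length (filter P (take q xs)) < length (filter P xs)"
proof -
  have "xs = take q xs @ xs ! q # drop (Suc q) xs" using assms(1) by (rule id_take_nth_drop)
  then have "filter P xs = filter P (take q xs) @ xs ! q # filter P (drop (Suc q) xs)"
    using assms(2) by (metis filter.simps(2) filter_append)
  then show "filter P xs ! length (filter P (take q xs)) = xs ! q"
    "length (filter P (take q xs)) < length (filter P xs)" by (simp_all add: nth_append)
qed

lemma nth_in_take_iff:
  assumes "distinct xs" "p < length xs" "q \<le> length xs"
  shows "xs ! p \<in> set (take q xs) \<longleftrightarrow> p < q"
proof
  assume "xs ! p \<in> set (take q xs)"
  then obtain r where "r < q" "xs ! r = xs ! p" using assms(3) by (auto simp: in_set_conv_nth)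
  then show "p < q" using nth_eq_iff_index_eq[OF assms(1)] assms by (metis order.strict_trans2)
next
  assume "p < q"
  then show "xs ! p \<in> set (take q xs)" using assms(3) by (auto simp: in_set_conv_nth)
qed

lemma filter_take_eq_takeWhile:
  assumes "distinct xs" "q < length xs" "P (xs ! q)"
  shows "filter P (take q xs) = takeWhile (\<lambda>y. y \<noteq> xs ! q) (filter P xs)"
proof -
  have "xs = take q xs @ xs ! q # drop (Suc q) xs" using assms(2) by (rule id_take_nth_drop)
  then have split: "filter P xs = filter P (take q xs) @ xs ! q # filter P (drop (Suc q) xs)"
    using assms(3) by (metis filter.simps(2) filter_append)
  have "xs ! q \<notin> set (filter P (take q xs))"
    using nth_in_take_iff[OF assms(1,2) less_imp_le[OF assms(2)]] by simp
  then show ?thesis unfolding split by (subst takeWhile_append2) auto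
qed

lemma interleavings_two_one:
  assumes "filter P u = [a, b]" "filter (\<lambda>y. \<not> P y) u = [c]"
  shows "u = [c, a, b] \<or> u = [a, c, b] \<or> u = [a, b, c]"
proof -
  have "length u = 3" using sum_length_filter_compl[of P u] assms by simp
  then obtain x y z where "u = [x, y, z]" by (auto simp: numeral_3_eq_3 length_Suc_conv)
  with assms show ?thesis by (cases "P x"; cases "P y"; cases "P z") simp_all
qed

(* The position of y in w, written as in D_op; junk if y does not occur in w. *)
definition pos :: "'a list \<Rightarrow> 'a \<Rightarrow> nat" where
  "pos w y = the (List.find (\<lambda>k. w ! k = y) [0..<length w])"

lemma pos_nth:
  assumes "distinct w" "q < length w"
  shows "pos w (w ! q) = q"
proof -
  have "\<forall>j<q. w ! j \<noteq> w ! q" using nth_eq_iff_index_eq[OF assms(1)] assms(2) by fastforce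
  then have "List.find (\<lambda>k. w ! k = w ! q) [0..<length w] = Some q"
    using assms(2) by (subst find_Some_iff) auto
  then show ?thesis unfolding pos_def by simp
qed

lemma nth_pos:
  assumes "distinct w" "y \<in> set w"
  shows "pos w y < length w" "w ! pos w y = y"
proof -
  obtain q where "q < length w" "w ! q = y" using assms(2) by (auto simp: in_set_conv_nth)
  with pos_nth[OF assms(1)] show "pos w y < length w" "w ! pos w y = y" by auto
qed

lemma pos_less_of_filter:
  assumes "distinct w" "j < k" "k < length (filter P w)"
  shows "pos w (filter P w ! j) < pos w (filter P w ! k)"
proof -
  define Q where "Q = filter (\<lambda>q. P (w ! q)) [0..<length w]"
  have "filter P w = filter P (map ((!) w) [0..<length w])" by (simp add: map_nth)
  also have "\<dots> = map ((!) w) Q" unfolding Q_def filter_map comp_def ..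
  finally have filter_eq: "filter P w = map ((!) w) Q" .
  have k: "k < length Q" using assms(3) unfolding filter_eq by simp
  then have j: "j < length Q" using assms(2) by simp
  have "sorted_wrt (<) Q" unfolding Q_def by (rule sorted_wrt_filter) simp
  then have "Q ! j < Q ! k" using k assms(2) by (simp add: sorted_wrt_iff_nth_less)
  moreover have "Q ! q < length w" if "q < length Q" for q
    using nth_mem[OF that] unfolding Q_def by simp
  ultimately show ?thesis using j k pos_nth[OF assms(1)] unfolding filter_eq by simp
qed

lemma pos_less_of_filter3:
  assumes "distinct w" "filter P w = [a, b, c]"
  shows "pos w a < pos w b" "pos w b < pos w c"
  using pos_less_of_filter[OF assms(1), of 0 1 P] pos_less_of_filter[OF assms(1), of 1 2 P] assms(2)
  by simp_all

lemma std_word_nth: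
  "q < length xs \<Longrightarrow> std_word xs ! q = length (filter (\<lambda>y. y < xs ! q) xs)
     + length (filter (\<lambda>y. y = xs ! q) (take q xs)) + 1"
  unfolding std_word_def by simp

lemma length_std_word: "length (std_word xs) = length xs"
  unfolding std_word_def by simp

lemma swap_vals_Suc_le: "swap_vals a (Suc a) x \<le> Suc x" "x \<le> Suc (swap_vals a (Suc a) x)"
  unfolding swap_vals_def by auto

lemma swap_vals_mono:
  "x < y \<Longrightarrow> \<not> (x = a \<and> y = Suc a) \<Longrightarrow> swap_vals a (Suc a) x < swap_vals a (Suc a) y"
  unfolding swap_vals_def by auto

lemma sorted_wrt_map_swap_vals:
  assumes "sorted_wrt (<) r" "\<not> (a \<in> set r \<and> Suc a \<in> set r)"
  shows "sorted_wrt (<) (map (swap_vals a (Suc a)) r)"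
proof -
  have "sorted_wrt (\<lambda>x y. swap_vals a (Suc a) x < swap_vals a (Suc a) y) r"
  proof (rule sorted_wrt_mono_rel[OF _ assms(1)])
    fix x y assume "x \<in> set r" "y \<in> set r" "x < y"
    with assms(2) show "swap_vals a (Suc a) x < swap_vals a (Suc a) y" by (auto intro: swap_vals_mono)
  qed
  then show ?thesis by (simp add: sorted_wrt_map)
qed

section \<open>An edge of the crystal skeleton\<close>

(* w is the reading word of T; f\<^sub>i acts on the collapsed word cw at position fpos,
   and v is the reading word of T'. *)
locale dyck_edge =
  fixes w :: "nat list" and i m :: nat
  assumes distinct_w: "distinct w" and set_w: "set w = {1..length w}"
    and dyck: "dyck_interval w i m"
    and f_defined: "unbr i 0 0 (map (collapse_letter i m) w) \<noteq> []"
begin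

definition cw :: "nat list" where
  "cw = map (collapse_letter i m) w"

definition fpos :: nat where
  "fpos = last (unbr i 0 0 cw)"

definition v :: "nat list" where
  "v = std_word (cw[fpos := Suc i])"

definition small_before :: "nat \<Rightarrow> nat" where
  "small_before q = length (filter (\<lambda>y. i \<le> y \<and> y \<le> i + m) (take q w))"

definition big_before :: "nat \<Rightarrow> nat" where
  "big_before q = length (filter (\<lambda>y. i + m < y \<and> y \<le> i + 2 * m) (take q w))"

lemma m_pos: "1 \<le> m" and i_pos: "1 \<le> i" and interval_le_length: "i + 2 * m \<le> length w"
  using dyck unfolding dyck_interval_def by auto

lemma length_cw: "length cw = length w"
  unfolding cw_def by simp

lemma fpos_facts: "fpos < length w" "cw ! fpos = i" "open_succs i 0 (take fpos cw) = 0"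
    "unbr i 0 (Suc fpos) (drop (Suc fpos) cw) = []"
  using last_unbr[OF f_defined[folded cw_def] fpos_def] length_cw by auto

lemma w_fpos_small: "i \<le> w ! fpos" "w ! fpos \<le> i + m"
  using fpos_facts(1,2) unfolding cw_def by (auto simp: collapse_letter_eq_iff)

lemma dyck_letters:
  "filter (\<lambda>y. i \<le> y \<and> y \<le> i + m) w = [i..<i + m + 1]"
  "filter (\<lambda>y. i + m < y \<and> y \<le> i + 2 * m) w = [i + m + 1..<i + 2 * m + 1]"
  "open_brackets (i + m) 0 (filter (\<lambda>y. i \<le> y \<and> y \<le> i + 2 * m) w) = 0"
proof -
  let ?u = "filter (\<lambda>y. i \<le> y \<and> y \<le> i + 2 * m) w"
  have "rsk_P ?u = [[i..<i + m + 1], [i + m + 1..<i + 2 * m + 1]]"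
    using dyck unfolding dyck_interval_def by simp
  from rsk_P_eq_two_rows[OF _ this, of "i + m"] distinct_w m_pos
  have "filter (\<lambda>y. y \<le> i + m) ?u = [i..<i + m + 1]"
    "filter (\<lambda>y. i + m < y) ?u = [i + m + 1..<i + 2 * m + 1]" "open_brackets (i + m) 0 ?u = 0"
    by auto
  moreover have "filter (\<lambda>y. y \<le> i + m) ?u = filter (\<lambda>y. i \<le> y \<and> y \<le> i + m) w"
    "filter (\<lambda>y. i + m < y) ?u = filter (\<lambda>y. i + m < y \<and> y \<le> i + 2 * m) w"
    by (auto intro: filter_cong)
  ultimately show "filter (\<lambda>y. i \<le> y \<and> y \<le> i + m) w = [i..<i + m + 1]"
    "filter (\<lambda>y. i + m < y \<and> y \<le> i + 2 * m) w = [i + m + 1..<i + 2 * m + 1]"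
    "open_brackets (i + m) 0 ?u = 0" by simp_all
qed

lemma small_letter_eq:
  assumes "q < length w" "i \<le> w ! q" "w ! q \<le> i + m"
  shows "w ! q = i + small_before q"
proof -
  note nth = nth_filter_length_filter_take[of q w "\<lambda>y. i \<le> y \<and> y \<le> i + m", OF assms(1)]
  have "small_before q < m + 1" using nth(2) assms unfolding small_before_def dyck_letters(1) by simp
  then show ?thesis
    using nth(1) assms unfolding small_before_def[symmetric] dyck_letters(1) by (simp del: upt_Suc)
qed

lemma big_letter_eq:
  assumes "q < length w" "i + m < w ! q" "w ! q \<le> i + 2 * m"
  shows "w ! q = i + m + 1 + big_before q"
proof -
  note nth = nth_filter_length_filter_take[of q w "\<lambda>y. i + m < y \<and> y \<le> i + 2 * m", OF assms(1)]
  have "big_before q < m" using nth(2) assms unfolding big_before_def dyck_letters(2) by simp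
  then show ?thesis
    using nth(1) assms unfolding big_before_def[symmetric] dyck_letters(2) by (simp del: upt_Suc)
qed

lemma count_i_take_cw: "count_list (take q cw) i = small_before q"
  unfolding cw_def small_before_def take_map count_list_map by (simp add: collapse_letter_eq_iff)

lemma count_Suc_i_take_cw: "count_list (take q cw) (Suc i) = big_before q"
  unfolding cw_def big_before_def take_map count_list_map using m_pos
  by (simp add: collapse_letter_eq_iff)

(* Every letter i + 1 of cw is matched and no letter i after fpos is unmatched,
   so the letters after fpos are balanced. *)
lemma small_before_fpos_eq_big_before: "small_before fpos = big_before fpos"
proof -
  define z1 where "z1 = take fpos cw"
  define z2 where "z2 = drop (Suc fpos) cw"
  have cw: "cw = z1 @ i # z2" unfolding z1_def z2_def
    using id_take_nth_drop[of fpos cw] fpos_facts(1,2) length_cw by simp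
  have "open_succs i 0 z1 = 0" unfolding z1_def using fpos_facts(3) .
  then have "open_succs i 0 cw = open_succs i 0 z2" unfolding cw open_succs_append by simp
  moreover have "open_succs i 0 cw = 0"
    using open_succs_map_collapse_letter[OF m_pos] dyck_letters(3) unfolding cw_def by simp
  ultimately have "open_succs i 0 z2 = 0" by simp
  with length_unbr[of 0 z2 i "Suc fpos"] fpos_facts(4)
  have "count_list z2 (Suc i) = count_list z2 i" unfolding z2_def by simp
  moreover have "count_list cw i = m + 1" "count_list cw (Suc i) = m"
    using count_i_take_cw[of "length w"] count_Suc_i_take_cw[of "length w"] dyck_letters(1,2)
    unfolding small_before_def big_before_def by (simp_all add: length_cw del: upt_Suc)
  moreover have "count_list z1 i = small_before fpos" "count_list z1 (Suc i) = big_before fpos"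
    unfolding z1_def by (simp_all add: count_i_take_cw count_Suc_i_take_cw)
  ultimately show ?thesis unfolding cw by simp
qed

lemma w_fpos_eq: "w ! fpos = i + small_before fpos"
  using small_letter_eq[OF fpos_facts(1) w_fpos_small] .

definition f_letter :: "nat \<Rightarrow> nat" where
  "f_letter y = (if y = w ! fpos then Suc i else collapse_letter i m y)"

lemma cw_update_eq_map: "cw[fpos := Suc i] = map f_letter w"
proof (rule nth_equalityI)
  fix q assume "q < length (cw[fpos := Suc i])"
  then have q: "q < length w" using length_cw by simp
  have "w ! q = w ! fpos \<longleftrightarrow> q = fpos" using nth_eq_iff_index_eq[OF distinct_w q fpos_facts(1)] .
  then show "cw[fpos := Suc i] ! q = map f_letter w ! q" using q length_cw unfolding f_letter_def cw_def by simp
qed (simp add: length_cw)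

lemma v_nth_card:
  assumes q: "q < length w"
  shows "v ! q = card ({y. f_letter y < f_letter (w ! q)} \<inter> {1..length w})
    + card ({y. f_letter y = f_letter (w ! q)} \<inter> set (take q w)) + 1"
proof -
  have "v ! q = length (filter (\<lambda>y. y < f_letter (w ! q)) (map f_letter w))
      + length (filter (\<lambda>y. y = f_letter (w ! q)) (take q (map f_letter w))) + 1"
    unfolding v_def cw_update_eq_map using std_word_nth[of q "map f_letter w"] q by simp
  also have "\<dots> = card ({y. f_letter y < f_letter (w ! q)} \<inter> {1..length w})
      + card ({y. f_letter y = f_letter (w ! q)} \<inter> set (take q w)) + 1"
    unfolding take_map length_filter_map distinct_length_filter[OF distinct_w]
      distinct_length_filter[OF distinct_take[OF distinct_w]]
    using set_w by (simp add: comp_def)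
  finally show ?thesis .
qed

lemma small_before_card:
  "small_before q = card ({y. i \<le> y \<and> y \<le> i + m} \<inter> set (take q w))"
  unfolding small_before_def using distinct_w by (simp add: distinct_length_filter)

lemma big_before_card:
  "big_before q = card ({y. i + m < y \<and> y \<le> i + 2 * m} \<inter> set (take q w))"
  unfolding big_before_def using distinct_w by (simp add: distinct_length_filter)

lemma w_fpos_in_take_iff: "q \<le> length w \<Longrightarrow> w ! fpos \<in> set (take q w) \<longleftrightarrow> fpos < q"
  using nth_in_take_iff[OF distinct_w fpos_facts(1)] .

lemma v_nth_outside:
  assumes q: "q < length w" and outside: "w ! q < i \<or> i + 2 * m < w ! q"
  shows "v ! q = w ! q"
proof -
  define x where "x = w ! q"
  define x0 where "x0 = w ! fpos"
  note defs = f_letter_def x0_def[symmetric] collapse_letter_def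
  have x: "1 \<le> x" "x \<le> length w" using q set_w unfolding x_def by (metis atLeastAtMost_iff nth_mem)+
  have x_notin: "x \<notin> set (take q w)"
    using nth_in_take_iff[OF distinct_w q] q unfolding x_def by simp
  have x0: "i \<le> x0" "x0 \<le> i + m" using w_fpos_small unfolding x0_def by auto
  have fx: "f_letter x = x" using outside x0 unfolding defs x_def[symmetric] by auto
  have "{y. f_letter y < f_letter x} \<inter> {1..length w} = {1..<x}"
    using outside x0 x m_pos unfolding fx x_def[symmetric] by (auto simp: defs split: if_splits)
  moreover have "{y. f_letter y = f_letter x} \<inter> set (take q w) = {}"
    using outside x0 x_notin m_pos unfolding fx x_def[symmetric] by (auto simp: defs split: if_splits)
  ultimately show ?thesis using v_nth_card[OF q] x unfolding x_def[symmetric] by simp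
qed

lemma v_nth_raised:
  assumes q: "q < length w" and raised: "q = fpos \<or> i + m < w ! q \<and> w ! q \<le> i + 2 * m"
  shows "v ! q = i + m + big_before q + (if fpos < q then 1 else 0)"
proof -
  define x0 where "x0 = w ! fpos"
  note defs = f_letter_def x0_def[symmetric] collapse_letter_def
  have x0: "i \<le> x0" "x0 \<le> i + m" using w_fpos_small unfolding x0_def by auto
  have x0_in: "x0 \<in> set (take q w) \<longleftrightarrow> fpos < q"
    using w_fpos_in_take_iff q unfolding x0_def by simp
  have fx: "f_letter (w ! q) = Suc i"
    using raised x0 unfolding f_letter_def collapse_letter_def x0_def by auto
  have less: "{y. f_letter y < f_letter (w ! q)} \<inter> {1..length w} = {1..<i} \<union> ({i..i + m} - {x0})"
    unfolding fx using x0 interval_le_length i_pos by (auto simp: defs split: if_splits)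
  have equal: "{y. f_letter y = f_letter (w ! q)} \<inter> set (take q w) =
      ({y. i + m < y \<and> y \<le> i + 2 * m} \<inter> set (take q w)) \<union> ({x0} \<inter> set (take q w))"
    unfolding fx using x0 m_pos by (auto simp: defs split: if_splits)
  have "card ({1..<i} \<union> ({i..i + m} - {x0})) = (i - 1) + m"
    using x0 by (subst card_Un_disjoint) auto
  moreover have "card (({y. i + m < y \<and> y \<le> i + 2 * m} \<inter> set (take q w)) \<union> ({x0} \<inter> set (take q w)))
      = big_before q + (if fpos < q then 1 else 0)"
    unfolding big_before_card using x0 x0_in by (subst card_Un_disjoint) auto
  ultimately show ?thesis using v_nth_card[OF q] i_pos unfolding less equal by simp
qed

lemma v_nth_lowered:
  assumes q: "q < length w" "q \<noteq> fpos" and small: "i \<le> w ! q" "w ! q \<le> i + m"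
  shows "v ! q = i + small_before q - (if fpos < q then 1 else 0)"
proof -
  define x0 where "x0 = w ! fpos"
  note defs = f_letter_def x0_def[symmetric] collapse_letter_def
  have x0: "i \<le> x0" "x0 \<le> i + m" using w_fpos_small unfolding x0_def by auto
  have x0_in: "x0 \<in> set (take q w) \<longleftrightarrow> fpos < q"
    using w_fpos_in_take_iff q unfolding x0_def by simp
  have "w ! q \<noteq> x0"
    using q fpos_facts(1) nth_eq_iff_index_eq[OF distinct_w] unfolding x0_def by blast
  then have fx: "f_letter (w ! q) = i" using small unfolding defs by auto
  have less: "{y. f_letter y < f_letter (w ! q)} \<inter> {1..length w} = {1..<i}"
    unfolding fx using x0 interval_le_length i_pos by (auto simp: defs split: if_splits)
  have equal: "{y. f_letter y = f_letter (w ! q)} \<inter> set (take q w) =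
      ({y. i \<le> y \<and> y \<le> i + m} \<inter> set (take q w)) - {x0}"
    unfolding fx using x0 m_pos by (auto simp: defs split: if_splits)
  have "card (({y. i \<le> y \<and> y \<le> i + m} \<inter> set (take q w)) - {x0})
      = small_before q - (if fpos < q then 1 else 0)"
    unfolding small_before_card using x0 x0_in by (simp add: card_Diff_singleton_if)
  moreover have "1 \<le> small_before q" if "fpos < q"
  proof -
    have "x0 \<in> {y. i \<le> y \<and> y \<le> i + m} \<inter> set (take q w)" using x0 x0_in that by simp
    then show ?thesis unfolding small_before_card
      by (metis Suc_leI card_gt_0_iff empty_iff finite_Int finite_set One_nat_def)
  qed
  ultimately show ?thesis using v_nth_card[OF q(1)] i_pos unfolding less equal by (cases "fpos < q") auto
qed

lemma v_fpos: "v ! fpos = w ! fpos + m"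
  using v_nth_raised[OF fpos_facts(1)] w_fpos_eq small_before_fpos_eq_big_before by simp

lemma v_nth:
  assumes q: "q < length w"
  shows "v ! q =
    (if q = fpos then w ! q + m
     else if i \<le> w ! q \<and> w ! q \<le> i + m then w ! q - (if fpos < q then 1 else 0)
     else if i + m < w ! q \<and> w ! q \<le> i + 2 * m then w ! q - 1 + (if fpos < q then 1 else 0)
     else w ! q)"
  using v_fpos v_nth_outside[OF q] v_nth_raised[OF q] v_nth_lowered[OF q]
    small_letter_eq[OF q] big_letter_eq[OF q] by auto

lemma m_le_1_if_swap_related:
  assumes "v = map (swap_vals a (Suc a)) w \<or> w = map (swap_vals a (Suc a)) v"
  shows "m \<le> 1"
  using assms
proof
  assume "v = map (swap_vals a (Suc a)) w"
  then have "v ! fpos = swap_vals a (Suc a) (w ! fpos)" using fpos_facts(1) by simp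
  then show "m \<le> 1" using v_fpos swap_vals_Suc_le(1)[of a "w ! fpos"] by simp
next
  assume swap: "w = map (swap_vals a (Suc a)) v"
  then have "w ! fpos = swap_vals a (Suc a) (v ! fpos)"
    using fpos_facts(1) by (metis length_map nth_map)
  then show "m \<le> 1" using v_fpos swap_vals_Suc_le(2)[of "v ! fpos" a] by simp
qed

lemma prefix_balanced:
  "open_brackets (i + m) 0 (filter (\<lambda>y. i \<le> y \<and> y \<le> i + 2 * m) (take fpos w)) = 0"
  using fpos_facts(3) open_succs_map_collapse_letter[OF m_pos] unfolding cw_def take_map by simp

(* Of the three interleavings of i, i + 1 with i + 2, the order i, i + 1, i + 2 leaves i + 2
   unmatched; the small letter at fpos is the one whose prefix is balanced. *)
lemma unit_dyck_patterns:
  assumes "m = 1"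
  shows "filter (\<lambda>y. i \<le> y \<and> y \<le> i + 2) w = [i, i + 2, Suc i] \<and> w ! fpos = i
    \<or> filter (\<lambda>y. i \<le> y \<and> y \<le> i + 2) w = [i + 2, i, Suc i] \<and> w ! fpos = Suc i"
proof -
  define u where "u = filter (\<lambda>y. i \<le> y \<and> y \<le> i + 2) w"
  have "filter (\<lambda>y. y \<le> Suc i) u = filter (\<lambda>y. i \<le> y \<and> y \<le> i + m) w"
    "filter (\<lambda>y. \<not> y \<le> Suc i) u = filter (\<lambda>y. i + m < y \<and> y \<le> i + 2 * m) w"
    unfolding u_def filter_filter using assms by (auto intro: filter_cong)
  then have "filter (\<lambda>y. y \<le> Suc i) u = [i, Suc i]" "filter (\<lambda>y. \<not> y \<le> Suc i) u = [i + 2]"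
    using dyck_letters(1,2) assms by (simp_all add: numeral_2_eq_2)
  from interleavings_two_one[OF this] have "u = [i + 2, i, Suc i] \<or> u = [i, i + 2, Suc i] \<or> u = [i, Suc i, i + 2]"
    by auto
  moreover have "w ! fpos = i \<or> w ! fpos = Suc i" using w_fpos_small assms by auto
  moreover have "open_brackets (Suc i) 0 (takeWhile (\<lambda>y. y \<noteq> w ! fpos) u) = 0"
    using prefix_balanced filter_take_eq_takeWhile[OF distinct_w fpos_facts(1)] w_fpos_small assms
    unfolding u_def by simp
  moreover have "open_brackets (Suc i) 0 u = 0" using dyck_letters(3) assms unfolding u_def by simp
  ultimately show ?thesis unfolding u_def[symmetric] by (elim disjE) simp_all
qed

lemma length_v: "length v = length w"
  unfolding v_def by (simp add: length_std_word length_cw)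

lemma unit_v_eq_swap_low:
  assumes m: "m = 1" and u: "filter (\<lambda>y. i \<le> y \<and> y \<le> i + 2) w = [i, i + 2, Suc i]"
    and x0: "w ! fpos = i"
  shows "v = map (swap_vals i (Suc i)) w"
proof (rule nth_equalityI)
  fix q assume "q < length v"
  then have q: "q < length w" using length_v by simp
  have "fpos < q" if "w ! q = Suc i \<or> w ! q = i + 2"
    using pos_less_of_filter3[OF distinct_w u] pos_nth[OF distinct_w q]
      pos_nth[OF distinct_w fpos_facts(1)] x0 that by auto
  moreover have "q = fpos \<longleftrightarrow> w ! q = i"
    using nth_eq_iff_index_eq[OF distinct_w q fpos_facts(1)] x0 by auto
  ultimately show "v ! q = map (swap_vals i (Suc i)) w ! q"
    using v_nth[OF q] m q by (auto simp: swap_vals_def)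
qed (simp add: length_v)

lemma unit_v_eq_swap_high:
  assumes m: "m = 1" and u: "filter (\<lambda>y. i \<le> y \<and> y \<le> i + 2) w = [i + 2, i, Suc i]"
    and x0: "w ! fpos = Suc i"
  shows "v = map (swap_vals (Suc i) (Suc (Suc i))) w"
proof (rule nth_equalityI)
  fix q assume "q < length v"
  then have q: "q < length w" using length_v by simp
  have "q < fpos" if "w ! q = i \<or> w ! q = i + 2"
    using pos_less_of_filter3[OF distinct_w u] pos_nth[OF distinct_w q]
      pos_nth[OF distinct_w fpos_facts(1)] x0 that by auto
  moreover have "q = fpos \<longleftrightarrow> w ! q = Suc i"
    using nth_eq_iff_index_eq[OF distinct_w q fpos_facts(1)] x0 by auto
  ultimately show "v ! q = map (swap_vals (Suc i) (Suc (Suc i))) w ! q"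
    using v_nth[OF q] m q by (auto simp: swap_vals_def)
qed (simp add: length_v)

end

section \<open>Reading words of standard tableaux\<close>

lemma row_word_map_map: "row_word (map (map f) T) = map f (row_word T)"
  unfolding row_word_def by (simp add: rev_map map_concat)

lemma shape_map_map: "shape (map (map f) T) = shape T"
  unfolding shape_def by (simp add: comp_def)

lemma chunks_map_length_concat: "chunks (map length xs) (concat xs) = xs"
  by (induction xs) auto

lemma chunks_sum_list:
  "length w = sum_list ls \<Longrightarrow> concat (chunks ls w) = w \<and> map length (chunks ls w) = ls"
proof (induction ls arbitrary: w)
  case (Cons l ls)
  then have "length (drop l w) = sum_list ls" by simp
  from Cons.IH[OF this] show ?case using Cons.prems by (simp add: min_def)
qed simp

lemma tab_of_word_row_word: "tab_of_word (shape T) (row_word T) = T"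
  unfolding tab_of_word_def shape_def row_word_def
  by (metis chunks_map_length_concat rev_map rev_rev_ident)

lemma length_row_word: "length (row_word T) = sum_list (shape T)"
  unfolding row_word_def shape_def by (simp add: length_concat rev_map[symmetric] sum_list_rev)

lemma row_word_tab_of_word: "length v = sum_list sh \<Longrightarrow> row_word (tab_of_word sh v) = v"
  unfolding tab_of_word_def row_word_def using chunks_sum_list[of v "rev sh"] by simp

lemma shape_tab_of_word: "length v = sum_list sh \<Longrightarrow> shape (tab_of_word sh v) = sh"
  unfolding tab_of_word_def shape_def using chunks_sum_list[of v "rev sh"]
  by (simp add: rev_map[symmetric])

lemma tab_of_word_map: "tab_of_word (shape T) (map f (row_word T)) = map (map f) T"
  using tab_of_word_row_word[of "map (map f) T"] unfolding row_word_map_map shape_map_map .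

lemma SYT_row_word:
  assumes "T \<in> SYT lam"
  shows "distinct (row_word T)" "set (row_word T) = {1..length (row_word T)}"
    "length (row_word T) = sum_list lam"
proof -
  have "distinct (concat (rev T))" using assms unfolding SYT_def
    by (induction T) (auto simp: distinct_append)
  then show "distinct (row_word T)" unfolding row_word_def .
  show "length (row_word T) = sum_list lam" using assms length_row_word unfolding SYT_def by simp
  then show "set (row_word T) = {1..length (row_word T)}" using assms unfolding SYT_def row_word_def by simp
qed

lemma SYT_row_sorted: "T \<in> SYT lam \<Longrightarrow> j < length T \<Longrightarrow> sorted_wrt (<) (T ! j)"
  unfolding SYT_def by auto

lemma SYT_column:
  "T \<in> SYT lam \<Longrightarrow> Suc j < length T \<Longrightarrow> k < length (T ! Suc j) \<Longrightarrow>
   k < length (T ! j) \<and> T ! j ! k < T ! Suc j ! k"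
  unfolding SYT_def by blast

definition row_offset :: "tableau \<Rightarrow> nat \<Rightarrow> nat" where
  "row_offset T j = length (concat (rev (drop (Suc j) T)))"

lemma row_word_split:
  assumes "j < length T"
  shows "row_word T = concat (rev (drop (Suc j) T)) @ T ! j @ concat (rev (take j T))"
proof -
  have "rev T = rev (drop (Suc j) T) @ T ! j # rev (take j T)"
    by (subst id_take_nth_drop[OF assms]) simp
  then show ?thesis unfolding row_word_def by simp
qed

lemma nth_row_word:
  "j < length T \<Longrightarrow> row_offset T j \<le> q \<Longrightarrow> q < row_offset T j + length (T ! j) \<Longrightarrow>
   row_word T ! q = T ! j ! (q - row_offset T j)"
  unfolding row_offset_def by (subst row_word_split) (auto simp: nth_append)

lemma row_offset_le: "j < length T \<Longrightarrow> row_offset T j + length (T ! j) \<le> length (row_word T)"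
  unfolding row_offset_def using row_word_split[of j T] by (metis le_add1 length_append add.assoc)

lemma row_offset_Suc: "Suc j < length T \<Longrightarrow> row_offset T j = row_offset T (Suc j) + length (T ! Suc j)"
  unfolding row_offset_def by (simp add: Cons_nth_drop_Suc[symmetric])

lemma pos_row_word:
  assumes "T \<in> SYT lam" "j < length T" "k < length (T ! j)"
  shows "pos (row_word T) (T ! j ! k) = row_offset T j + k"
  using pos_nth[OF SYT_row_word(1)[OF assms(1)], of "row_offset T j + k"]
    nth_row_word[OF assms(2), of "row_offset T j + k"] row_offset_le[OF assms(2)] assms(3)
  by simp

lemma swap_entries_SYT:
  assumes T: "T \<in> SYT lam" and a: "a \<in> set (concat T)" "Suc a \<in> set (concat T)"
    and not_row: "\<And>j. j < length T \<Longrightarrow> \<not> (a \<in> set (T ! j) \<and> Suc a \<in> set (T ! j))"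
    and not_column: "\<And>j k. Suc j < length T \<Longrightarrow> k < length (T ! Suc j) \<Longrightarrow>
      \<not> (T ! j ! k = a \<and> T ! Suc j ! k = Suc a)"
  shows "map (map (swap_vals a (Suc a))) T \<in> SYT lam"
proof -
  let ?s = "swap_vals a (Suc a)"
  let ?T = "map (map ?s) T"
  have concat: "concat ?T = map ?s (concat T)" by (simp add: map_concat)
  have "inj ?s" unfolding inj_def swap_vals_def by auto
  have "?s ` set (concat T) = set (concat T)"
    using a unfolding swap_vals_def by (auto simp: image_iff)
  then have "set (concat ?T) = {1..sum_list lam}" using T unfolding concat SYT_def by simp
  moreover have "distinct (concat ?T)"
    using T \<open>inj ?s\<close> unfolding concat SYT_def by (simp add: distinct_map inj_on_def)
  moreover have "\<forall>r\<in>set ?T. sorted_wrt (<) r"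
  proof
    fix r assume "r \<in> set ?T"
    then obtain j where j: "j < length T" "r = map ?s (T ! j)" by (auto simp: in_set_conv_nth)
    show "sorted_wrt (<) r"
      unfolding j(2) using sorted_wrt_map_swap_vals SYT_row_sorted[OF T j(1)] not_row[OF j(1)] by blast
  qed
  moreover have "\<forall>j k. Suc j < length ?T \<and> k < length (?T ! Suc j) \<longrightarrow>
      k < length (?T ! j) \<and> ?T ! j ! k < ?T ! Suc j ! k"
  proof (intro allI impI)
    fix j k assume "Suc j < length ?T \<and> k < length (?T ! Suc j)"
    then have jk: "Suc j < length T" "k < length (T ! Suc j)" by auto
    then have "k < length (T ! j)" "T ! j ! k < T ! Suc j ! k" using T unfolding SYT_def by blast+
    with swap_vals_mono[OF _ not_column[OF jk]] jk
    show "k < length (?T ! j) \<and> ?T ! j ! k < ?T ! Suc j ! k" by simp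
  qed
  moreover have "shape ?T = lam" using T unfolding SYT_def by (simp add: shape_map_map)
  ultimately show ?thesis unfolding SYT_def by blast
qed

lemma sorted_wrt_less_index:
  assumes "sorted_wrt (<) (r :: nat list)" "k1 < length r" "k2 < length r" "r ! k1 < r ! k2"
  shows "k1 < k2"
  using assms by (metis linorder_neqE_nat not_less_iff_gr_or_eq sorted_wrt_iff_nth_less)

lemma swap_SYT_of_succ_succ_between:
  assumes T: "T \<in> SYT lam"
    and mem: "a \<in> set (row_word T)" "Suc a \<in> set (row_word T)" "Suc (Suc a) \<in> set (row_word T)"
    and order: "pos (row_word T) a < pos (row_word T) (Suc (Suc a))"
      "pos (row_word T) (Suc (Suc a)) < pos (row_word T) (Suc a)"
  shows "map (map (swap_vals a (Suc a))) T \<in> SYT lam"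
proof (rule swap_entries_SYT[OF T])
  let ?w = "row_word T"
  note nth_pos = nth_pos[OF SYT_row_word(1)[OF T]]
  show "a \<in> set (concat T)" "Suc a \<in> set (concat T)" using mem unfolding row_word_def by auto
  fix j assume j: "j < length T"
  show "\<not> (a \<in> set (T ! j) \<and> Suc a \<in> set (T ! j))"
  proof
    assume "a \<in> set (T ! j) \<and> Suc a \<in> set (T ! j)"
    then obtain k1 k2 where k: "k1 < length (T ! j)" "T ! j ! k1 = a" "k2 < length (T ! j)" "T ! j ! k2 = Suc a"
      by (auto simp: in_set_conv_nth)
    note sorted = SYT_row_sorted[OF T j]
    have "k1 < k2" using sorted_wrt_less_index[OF sorted k(1,3)] k by simp
    have "pos ?w a = row_offset T j + k1" "pos ?w (Suc a) = row_offset T j + k2"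
      using pos_row_word[OF T j] k by metis+
    then have "?w ! pos ?w (Suc (Suc a)) = T ! j ! (pos ?w (Suc (Suc a)) - row_offset T j)"
      using nth_row_word[OF j] order k by simp
    moreover have "k1 < pos ?w (Suc (Suc a)) - row_offset T j" "pos ?w (Suc (Suc a)) - row_offset T j < k2"
      using \<open>pos ?w a = _\<close> \<open>pos ?w (Suc a) = _\<close> order by auto
    ultimately have "a < Suc (Suc a)" "Suc (Suc a) < Suc a"
      using sorted k nth_pos(2)[OF mem(3)] by (metis sorted_wrt_iff_nth_less order.strict_trans)+
    then show False by simp
  qed
next
  let ?w = "row_word T"
  fix j k assume j: "Suc j < length T" and k: "k < length (T ! Suc j)"
  show "\<not> (T ! j ! k = a \<and> T ! Suc j ! k = Suc a)"
  proof
    assume "T ! j ! k = a \<and> T ! Suc j ! k = Suc a"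
    then have "pos ?w a = row_offset T j + k" "pos ?w (Suc a) = row_offset T (Suc j) + k"
      using pos_row_word[OF T _ _] SYT_column[OF T j k] j k by (metis Suc_lessD)+
    then show False using row_offset_Suc[OF j] order k by simp
  qed
qed

lemma pos_not_between_column:
  assumes T: "T \<in> SYT lam" and j: "Suc j < length T" and k: "k < length (T ! Suc j)"
    and entries: "T ! j ! k = Suc a" "T ! Suc j ! k = Suc (Suc a)" and a: "a \<in> set (row_word T)"
  shows "\<not> (pos (row_word T) (Suc (Suc a)) < pos (row_word T) a \<and> pos (row_word T) a < pos (row_word T) (Suc a))"
proof
  let ?w = "row_word T"
  assume order: "pos ?w (Suc (Suc a)) < pos ?w a \<and> pos ?w a < pos ?w (Suc a)"
  have j': "j < length T" and kj: "k < length (T ! j)" using j SYT_column[OF T j k] by auto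
  have pb: "pos ?w (Suc a) = row_offset T j + k"
    using pos_row_word[OF T j' kj] entries by simp
  have pc: "pos ?w (Suc (Suc a)) = row_offset T (Suc j) + k"
    using pos_row_word[OF T j k] entries by simp
  have a_pos: "?w ! pos ?w a = a" using nth_pos(2)[OF SYT_row_word(1)[OF T] a] .
  note offset = row_offset_Suc[OF j]
  show False
  proof (cases "pos ?w a < row_offset T j")
    case True
    define k' where "k' = pos ?w a - row_offset T (Suc j)"
    have k': "k < k'" "k' < length (T ! Suc j)" using True offset pc order unfolding k'_def by auto
    have "a = T ! Suc j ! k'"
      using nth_row_word[OF j, of "pos ?w a"] a_pos True offset pc order unfolding k'_def by simp
    moreover have "T ! Suc j ! k < T ! Suc j ! k'"
      using SYT_row_sorted[OF T j] k' by (simp add: sorted_wrt_iff_nth_less)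
    ultimately show False using entries by simp
  next
    case False
    define k' where "k' = pos ?w a - row_offset T j"
    have k': "k' < k" using False pb order unfolding k'_def by auto
    have a_entry: "T ! j ! k' = a"
      using nth_row_word[OF j', of "pos ?w a"] a_pos False pb order kj unfolding k'_def by simp
    have k'_len: "k' < length (T ! Suc j)" using k' k by simp
    have "T ! j ! k' < T ! Suc j ! k'" using SYT_column[OF T j k'_len] by simp
    moreover have "T ! Suc j ! k' < T ! Suc j ! k"
      using SYT_row_sorted[OF T j] k' k by (simp add: sorted_wrt_iff_nth_less)
    ultimately have "T ! Suc j ! k' = Suc a" using a_entry entries by simp
    then have "pos ?w (Suc a) = row_offset T (Suc j) + k'" using pos_row_word[OF T j k'_len] by simp
    then show False using pb offset k'_len by simp
  qed
qed

lemma swap_succ_SYT_of_between: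
  assumes T: "T \<in> SYT lam"
    and mem: "a \<in> set (row_word T)" "Suc a \<in> set (row_word T)" "Suc (Suc a) \<in> set (row_word T)"
    and order: "pos (row_word T) (Suc (Suc a)) < pos (row_word T) a"
      "pos (row_word T) a < pos (row_word T) (Suc a)"
  shows "map (map (swap_vals (Suc a) (Suc (Suc a)))) T \<in> SYT lam"
proof (rule swap_entries_SYT[OF T])
  let ?w = "row_word T"
  show "Suc a \<in> set (concat T)" "Suc (Suc a) \<in> set (concat T)" using mem unfolding row_word_def by auto
  fix j assume j: "j < length T"
  show "\<not> (Suc a \<in> set (T ! j) \<and> Suc (Suc a) \<in> set (T ! j))"
  proof
    assume "Suc a \<in> set (T ! j) \<and> Suc (Suc a) \<in> set (T ! j)"
    then obtain k1 k2 where k: "k1 < length (T ! j)" "T ! j ! k1 = Suc a"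
      "k2 < length (T ! j)" "T ! j ! k2 = Suc (Suc a)"
      by (auto simp: in_set_conv_nth)
    have "k1 < k2" using sorted_wrt_less_index[OF SYT_row_sorted[OF T j] k(1,3)] k by simp
    moreover have "pos ?w (Suc a) = row_offset T j + k1" "pos ?w (Suc (Suc a)) = row_offset T j + k2"
      using pos_row_word[OF T j] k by metis+
    ultimately show False using order by simp
  qed
next
  fix j k assume "Suc j < length T" "k < length (T ! Suc j)"
  then show "\<not> (T ! j ! k = Suc a \<and> T ! Suc j ! k = Suc (Suc a))"
    using pos_not_between_column[OF T] mem(1) order by blast
qed

lemma D_op_pos:
  "D_op j T = (let w = row_word T; a = pos w (j - 1); b = pos w j; c = pos w (j + 1) in
     if (b < c \<and> c < a) \<or> (a < c \<and> c < b) then Some (map (map (swap_vals (j - 1) j)) T)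
     else if (b < a \<and> a < c) \<or> (c < a \<and> a < b) then Some (map (map (swap_vals j (j + 1))) T)
     else None)"
  unfolding D_op_def pos_def ..

lemma D_op_Some_swap: "D_op j X = Some Y \<Longrightarrow> 1 < j \<Longrightarrow> \<exists>a. Y = map (map (swap_vals a (Suc a))) X"
  unfolding D_op_def Let_def by (auto split: if_splits intro: exI[of _ "j - 1"] exI[of _ j])

lemma cs_edge_dyck_edge:
  assumes "cs_edge lam T I T'"
  obtains i m where "I = {i..i + 2 * m}" "T \<in> SYT lam" "dyck_edge (row_word T) i m"
    "T' = tab_of_word (shape T) (dyck_edge.v (row_word T) i m)"
proof -
  from assms obtain i m b' where I: "I = {i..i + 2 * m}" and T: "T \<in> SYT lam"
    and dyck: "dyck_interval (row_word T) i m" and f: "f_tab i (collapse i m T) = Some b'"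
    and T': "T' = std_tab b'"
    unfolding cs_edge_def by blast
  define w where "w = row_word T"
  define z where "z = map (collapse_letter i m) w"
  have "map_option (tab_of_word (shape T)) (f_word i z) = Some b'"
    using f unfolding f_tab_def z_def w_def collapse_eq_map_map row_word_map_map shape_map_map .
  then obtain w2 where "f_word i z = Some w2" and b': "b' = tab_of_word (shape T) w2" by auto
  then have f_defined: "unbr i 0 0 z \<noteq> []" and w2: "w2 = z[last (unbr i 0 0 z) := Suc i]"
    unfolding f_word_def Let_def by (auto split: if_splits)
  interpret dyck_edge w i m
    using SYT_row_word[OF T] dyck f_defined unfolding w_def z_def by unfold_locales auto
  have w2_v: "std_word w2 = v" unfolding v_def w2 fpos_def cw_def z_def ..
  have "length w2 = sum_list (shape T)" unfolding w2 z_def w_def by (simp add: length_row_word)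
  then have "T' = tab_of_word (shape T) v"
    unfolding T' std_tab_def b' w2_v[symmetric] by (simp add: row_word_tab_of_word shape_tab_of_word)
  with I T dyck_edge_axioms show ?thesis unfolding w_def by (rule that)
qed

lemma unit_dyck_edge_de_adj:
  assumes T: "T \<in> SYT lam" and edge: "dyck_edge (row_word T) i 1"
  shows "de_adj lam T (tab_of_word (shape T) (dyck_edge.v (row_word T) i 1))"
proof -
  interpret dyck_edge "row_word T" i 1 by (rule edge)
  let ?w = "row_word T"
  have mem: "i \<in> set ?w" "Suc i \<in> set ?w" "Suc (Suc i) \<in> set ?w"
    using set_w i_pos interval_le_length by auto
  have j: "1 < Suc i" "Suc i < sum_list lam"
    using i_pos interval_le_length SYT_row_word(3)[OF T] by auto
  from unit_dyck_patterns consider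
      (low) "filter (\<lambda>y. i \<le> y \<and> y \<le> i + 2) ?w = [i, i + 2, Suc i]" "?w ! fpos = i"
    | (high) "filter (\<lambda>y. i \<le> y \<and> y \<le> i + 2) ?w = [i + 2, i, Suc i]" "?w ! fpos = Suc i"
    by auto
  then show ?thesis
  proof cases
    case low
    note order = pos_less_of_filter3[OF distinct_w low(1)]
    have "D_op (Suc i) T = Some (map (map (swap_vals i (Suc i))) T)"
      unfolding D_op_pos Let_def using order by simp
    moreover have "map (map (swap_vals i (Suc i))) T \<in> SYT lam"
      using swap_SYT_of_succ_succ_between[OF T mem] order by simp
    moreover have "tab_of_word (shape T) v = map (map (swap_vals i (Suc i))) T"
      using unit_v_eq_swap_low[OF refl low] tab_of_word_map by simp
    ultimately show ?thesis using T j unfolding de_adj_def by auto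
  next
    case high
    note order = pos_less_of_filter3[OF distinct_w high(1)]
    have "D_op (Suc i) T = Some (map (map (swap_vals (Suc i) (Suc (Suc i)))) T)"
      unfolding D_op_pos Let_def using order by simp
    moreover have "map (map (swap_vals (Suc i) (Suc (Suc i)))) T \<in> SYT lam"
      using swap_succ_SYT_of_between[OF T mem] order by simp
    moreover have "tab_of_word (shape T) v = map (map (swap_vals (Suc i) (Suc (Suc i)))) T"
      using unit_v_eq_swap_high[OF refl high] tab_of_word_map by simp
    ultimately show ?thesis using T j unfolding de_adj_def by auto
  qed
qed

theorem proposition4p2:
  fixes lam :: "nat list" and T T' :: tableau and I :: "nat set"
  assumes "is_partition lam"
    and "cs_edge lam T I T'"
  shows "de_adj lam T T' \<longleftrightarrow> card I = 3"
proof -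
  obtain i m where I: "I = {i..i + 2 * m}" and T: "T \<in> SYT lam"
    and edge: "dyck_edge (row_word T) i m" and T': "T' = tab_of_word (shape T) (dyck_edge.v (row_word T) i m)"
    using cs_edge_dyck_edge[OF assms(2)] .
  interpret dyck_edge "row_word T" i m by (rule edge)
  have row_T': "row_word T' = v"
    unfolding T' by (simp add: row_word_tab_of_word length_v length_row_word)
  have card_I: "card I = 2 * m + 1" unfolding I by simp
  show ?thesis
  proof
    assume "de_adj lam T T'"
    then obtain a where "v = map (swap_vals a (Suc a)) (row_word T) \<or> row_word T = map (swap_vals a (Suc a)) v"
      unfolding de_adj_def using D_op_Some_swap row_T' row_word_map_map by metis
    then show "card I = 3" using m_le_1_if_swap_related m_pos card_I by fastforce
  next
    assume "card I = 3"
    then have "m = 1" using card_I by simp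
    then show "de_adj lam T T'" using unit_dyck_edge_de_adj[OF T] edge unfolding T' by simp
  qed
qed

end
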